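(* Let $G_1$ and $G_2$ be two graphs of order $n$ that are cospectral with respect to the adjacency matrix, such that $Z_{-}(G_1)\neq Z_{-}(G_2)$ and $Z_{-}(G_i)=M_{-}(G_i)$ for $i=1,2$. Then there exist infinitely many pairs of graphs that are cospectral (with respect to the adjacency matrix) and have different zero forcing numbers and different skew zero forcing numbers.
   Context: All graphs are finite, simple and undirected. Two graphs are cospectral (with respect to the adjacency matrix) if their adjacency matrices have the same multiset of eigenvalues. The zero forcing number $Z(G)$ is the minimum size of a set $S\subseteq V(G)$ such that, if the vertices of $S$ are colored blue and all others white, repeated application of the rule "a blue vertex with exactly one white neighbor forces that neighbor to become blue" eventually makes every vertex blue. The skew zero forcing number $Z_{-}(G)$ is defined in the same way but with the rule "any vertex (blue or white) that has exactly one white neighbor forces that neighbor to become blue". $M_{-}(G)$ denotes the maximum nullity over all real skew-symmetric $n\times n$ matrices $B=[b_{ij}]$ with $b_{ij}\neq 0$ if and only if $\{i,j\}$ is an edge of $G$. *)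

theory Defs
  imports "Jordan_Normal_Form.Char_Poly" "Jordan_Normal_Form.Matrix_Kernel"
begin

text \<open>A (labelled) finite simple graph of order n: vertex set {0..<n}, edge relation E
  (symmetric, irreflexive, contained in the vertex set).\<close>
type_synonym graph = "nat \<times> (nat \<times> nat) set"

definition simple_graph :: "graph \<Rightarrow> bool" where
  "simple_graph G \<longleftrightarrow> snd G \<subseteq> {0..<fst G} \<times> {0..<fst G}
     \<and> (\<forall>u v. (u, v) \<in> snd G \<longrightarrow> (v, u) \<in> snd G)
     \<and> (\<forall>u. (u, u) \<notin> snd G)"

definition adj_matrix :: "graph \<Rightarrow> real mat" where
  "adj_matrix G = mat (fst G) (fst G) (\<lambda>(i, j). if (i, j) \<in> snd G then 1 else 0)"

definition adj_spectrum :: "graph \<Rightarrow> complex multiset" where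
  "adj_spectrum G = proots (map_poly complex_of_real (char_poly (adj_matrix G)))"

definition cospectral :: "graph \<Rightarrow> graph \<Rightarrow> bool" where
  "cospectral G H \<longleftrightarrow> adj_spectrum G = adj_spectrum H"

inductive_set zf_closure :: "graph \<Rightarrow> nat set \<Rightarrow> nat set" for G S where
  init: "v \<in> S \<Longrightarrow> v \<in> zf_closure G S"
| force: "\<lbrakk> u \<in> zf_closure G S; (u, w) \<in> snd G;
           \<forall>x. (u, x) \<in> snd G \<and> x \<noteq> w \<longrightarrow> x \<in> zf_closure G S \<rbrakk>
          \<Longrightarrow> w \<in> zf_closure G S"

inductive_set szf_closure :: "graph \<Rightarrow> nat set \<Rightarrow> nat set" for G S where
  init: "v \<in> S \<Longrightarrow> v \<in> szf_closure G S"
| force: "\<lbrakk> u < fst G; (u, w) \<in> snd G;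
           \<forall>x. (u, x) \<in> snd G \<and> x \<noteq> w \<longrightarrow> x \<in> szf_closure G S \<rbrakk>
          \<Longrightarrow> w \<in> szf_closure G S"

definition zero_forcing_number :: "graph \<Rightarrow> nat" where
  "zero_forcing_number G = (LEAST k. \<exists>S. S \<subseteq> {0..<fst G} \<and> card S = k
      \<and> zf_closure G S = {0..<fst G})"

definition skew_zero_forcing_number :: "graph \<Rightarrow> nat" where
  "skew_zero_forcing_number G = (LEAST k. \<exists>S. S \<subseteq> {0..<fst G} \<and> card S = k
      \<and> szf_closure G S = {0..<fst G})"

definition skew_pattern_matrices :: "graph \<Rightarrow> real mat set" where
  "skew_pattern_matrices G = {B. B \<in> carrier_mat (fst G) (fst G)
      \<and> (\<forall>i<fst G. \<forall>j<fst G. B $$ (i, j) = - B $$ (j, i))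
      \<and> (\<forall>i<fst G. \<forall>j<fst G. B $$ (i, j) \<noteq> 0 \<longleftrightarrow> (i, j) \<in> snd G)}"

definition max_skew_nullity :: "graph \<Rightarrow> nat" where
  "max_skew_nullity G = Max (kernel_dim ` skew_pattern_matrices G)"

end

theory Submission
  imports Defs
begin

text \<open>
  Adjacency spectra, zero forcing numbers and skew zero forcing numbers are all additive under
  disjoint union: the adjacency matrix becomes block diagonal, and a vertex can only force inside
  its own component. The graphs \<open>K\<^sub>1\<^sub>,\<^sub>3 + P\<^sub>2\<close> and \<open>P\<^sub>5 + P\<^sub>1\<close> are cospectral with zero forcing
  numbers 3 and 2. Adding one of them to each of \<open>G\<^sub>1\<close>, \<open>G\<^sub>2\<close> (in an order chosen so that the skew
  zero forcing numbers of the sums still differ) yields a cospectral pair differing in both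
  numbers, and adding \<open>k\<close> isolated vertices to both graphs of that pair gives infinitely many.
\<close>

section \<open>Disjoint unions and their spectra\<close>

definition shift_edges :: "nat \<Rightarrow> (nat \<times> nat) set \<Rightarrow> (nat \<times> nat) set" where
  "shift_edges k F = (\<lambda>(a, b). (a + k, b + k)) ` F"

definition disjoint_union :: "graph \<Rightarrow> graph \<Rightarrow> graph" where
  "disjoint_union G H = (fst G + fst H, snd G \<union> shift_edges (fst G) (snd H))"

lemma shift_edges_iff:
  "(i, j) \<in> shift_edges k F \<longleftrightarrow> k \<le> i \<and> k \<le> j \<and> (i - k, j - k) \<in> F"
  unfolding shift_edges_def by (auto simp: image_iff intro!: bexI[where x = "(i - k, j - k)"])

lemma fst_disjoint_union [simp]: "fst (disjoint_union G H) = fst G + fst H"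
  by (simp add: disjoint_union_def)

lemma simple_graph_edgeD: "simple_graph G \<Longrightarrow> (u, v) \<in> snd G \<Longrightarrow> u < fst G \<and> v < fst G"
  unfolding simple_graph_def by auto

lemma simple_graph_disjoint_union:
  "simple_graph G \<Longrightarrow> simple_graph H \<Longrightarrow> simple_graph (disjoint_union G H)"
  unfolding simple_graph_def disjoint_union_def by (fastforce simp: shift_edges_iff)

lemma simple_graph_edgeless: "simple_graph (k, {})"
  unfolding simple_graph_def by simp

lemma disjoint_union_edgeE:
  assumes "(u, w) \<in> snd (disjoint_union G H)"
  obtains "(u, w) \<in> snd G"
    | a b where "(a, b) \<in> snd H" "u = a + fst G" "w = b + fst G"
  using assms unfolding disjoint_union_def shift_edges_def by auto

lemma disjoint_union_edge_left_iff:
  "u < fst G \<Longrightarrow> (u, x) \<in> snd (disjoint_union G H) \<longleftrightarrow> (u, x) \<in> snd G"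
  unfolding disjoint_union_def by (simp add: shift_edges_iff)

lemma disjoint_union_edge_right_iff:
  assumes "simple_graph G"
  shows "(a + fst G, x) \<in> snd (disjoint_union G H) \<longleftrightarrow> (\<exists>b. (a, b) \<in> snd H \<and> x = b + fst G)"
  using simple_graph_edgeD[OF assms, of "a + fst G" x]
  unfolding disjoint_union_def by (auto simp: shift_edges_iff)

lemma Un_shift_split: "(S :: nat set) = S \<inter> {..<n} \<union> (\<lambda>x. x + n) ` {x. x + n \<in> S}"
proof (intro equalityI subsetI)
  fix x assume "x \<in> S"
  show "x \<in> S \<inter> {..<n} \<union> (\<lambda>x. x + n) ` {x. x + n \<in> S}"
  proof (cases "x < n")
    case False
    show ?thesis
      by (intro UnI2 image_eqI[where x = "x - n"]) (use False \<open>x \<in> S\<close> in auto)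
  qed (use \<open>x \<in> S\<close> in auto)
qed auto

lemma Un_shift_eq_atLeastLessThan_iff:
  fixes A B :: "nat set"
  assumes "A \<subseteq> {0..<n}" "B \<subseteq> {0..<m}"
  shows "A \<union> (\<lambda>x. x + n) ` B = {0..<n + m} \<longleftrightarrow> A = {0..<n} \<and> B = {0..<m}"
proof
  assume union: "A \<union> (\<lambda>x. x + n) ` B = {0..<n + m}"
  have "x \<in> A" if "x < n" for x
  proof -
    have "x \<in> A \<union> (\<lambda>x. x + n) ` B" using that union by simp
    then show ?thesis using that by auto
  qed
  moreover have "x \<in> B" if "x < m" for x
  proof -
    have "x + n \<in> A \<union> (\<lambda>x. x + n) ` B" using that union by auto
    then show ?thesis using assms(1) by auto
  qed
  ultimately show "A = {0..<n} \<and> B = {0..<m}" using assms by auto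
next
  assume "A = {0..<n} \<and> B = {0..<m}"
  then show "A \<union> (\<lambda>x. x + n) ` B = {0..<n + m}"
    by (simp add: add.commute ivl_disj_un_two(3))
qed

lemma card_Un_shift:
  fixes A B :: "nat set"
  assumes "finite A" "finite B" "A \<subseteq> {..<n}"
  shows "card (A \<union> (\<lambda>x. x + n) ` B) = card A + card B"
proof -
  have "A \<inter> (\<lambda>x. x + n) ` B = {}" using assms(3) by auto
  then show ?thesis using assms by (simp add: card_Un_disjoint card_image)
qed

lemma char_poly_four_block_mat_lower_left_zero:
  fixes A :: "'a :: idom mat"
  assumes A: "A \<in> carrier_mat n n" and B: "B \<in> carrier_mat m m" and C: "C \<in> carrier_mat n m"
  shows "char_poly (four_block_mat A C (0\<^sub>m m n) B) = char_poly A * char_poly B"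
proof -
  let ?cm = "\<lambda>A. [:0, 1:] \<cdot>\<^sub>m 1\<^sub>m (dim_row A) + map_mat (\<lambda>a. [:- a:]) A"
  have "?cm (four_block_mat A C (0\<^sub>m m n) B)
      = four_block_mat (?cm A) (map_mat (\<lambda>a. [:- a:]) C) (0\<^sub>m m n) (?cm B)"
    by (rule eq_matI) (use A B C in \<open>auto simp: one_poly_def\<close>)
  also have "det \<dots> = det (?cm A) * det (?cm B)"
    by (rule det_four_block_mat_lower_left_zero) (use A B C in auto)
  finally show ?thesis
    unfolding char_poly_defs using A B by simp
qed

lemma adj_matrix_carrier: "adj_matrix G \<in> carrier_mat (fst G) (fst G)"
  by (simp add: adj_matrix_def)

lemma adj_matrix_disjoint_union:
  assumes "simple_graph G"
  shows "adj_matrix (disjoint_union G H)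
    = four_block_mat (adj_matrix G) (0\<^sub>m (fst G) (fst H)) (0\<^sub>m (fst H) (fst G)) (adj_matrix H)"
  using simple_graph_edgeD[OF assms]
  by (intro eq_matI) (auto simp: adj_matrix_def disjoint_union_def shift_edges_iff)

lemma adj_spectrum_disjoint_union:
  assumes "simple_graph G"
  shows "adj_spectrum (disjoint_union G H) = adj_spectrum G + adj_spectrum H"
proof -
  interpret complex_hom: map_poly_idom_hom complex_of_real ..
  have "char_poly (adj_matrix (disjoint_union G H)) = char_poly (adj_matrix G) * char_poly (adj_matrix H)"
    unfolding adj_matrix_disjoint_union[OF assms]
    by (rule char_poly_four_block_mat_lower_left_zero) (auto simp: adj_matrix_carrier)
  moreover have "char_poly (adj_matrix K) \<noteq> 0" for K
    using degree_monic_char_poly[OF adj_matrix_carrier[of K]] by auto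
  ultimately show ?thesis
    unfolding adj_spectrum_def by (simp add: complex_hom.hom_mult proots_mult)
qed

lemma cospectral_disjoint_union:
  "simple_graph G \<Longrightarrow> simple_graph G' \<Longrightarrow> cospectral G G' \<Longrightarrow> cospectral H H'
    \<Longrightarrow> cospectral (disjoint_union G H) (disjoint_union G' H')"
  unfolding cospectral_def by (simp add: adj_spectrum_disjoint_union)

inductive_set forcing_closure :: "bool \<Rightarrow> graph \<Rightarrow> nat set \<Rightarrow> nat set" for skew G S where
  init: "v \<in> S \<Longrightarrow> v \<in> forcing_closure skew G S"
| force: "\<lbrakk> if skew then u < fst G else u \<in> forcing_closure skew G S; (u, w) \<in> snd G;
           \<forall>x. (u, x) \<in> snd G \<and> x \<noteq> w \<longrightarrow> x \<in> forcing_closure skew G S \<rbrakk>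
          \<Longrightarrow> w \<in> forcing_closure skew G S"

lemma zf_closure_eq_forcing_closure: "zf_closure G S = forcing_closure False G S"
proof (intro subset_antisym subsetI)
  show "v \<in> forcing_closure False G S" if "v \<in> zf_closure G S" for v
    using that
  proof induction
    case (force u w)
    show ?case by (rule forcing_closure.force[where u = u]) (use force in auto)
  qed (rule forcing_closure.init)
  show "v \<in> zf_closure G S" if "v \<in> forcing_closure False G S" for v
    using that
  proof induction
    case (force u w)
    show ?case by (rule zf_closure.force[where u = u]) (use force in auto)
  qed (rule zf_closure.init)
qed

lemma szf_closure_eq_forcing_closure: "szf_closure G S = forcing_closure True G S"
proof (intro subset_antisym subsetI)
  show "v \<in> forcing_closure True G S" if "v \<in> szf_closure G S" for v
    using that
  proof induction
    case (force u w)
    show ?case by (rule forcing_closure.force[where u = u]) (use force in auto)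
  qed (rule forcing_closure.init)
  show "v \<in> szf_closure G S" if "v \<in> forcing_closure True G S" for v
    using that
  proof induction
    case (force u w)
    show ?case by (rule szf_closure.force[where u = u]) (use force in auto)
  qed (rule szf_closure.init)
qed

lemma subset_forcing_closure: "S \<subseteq> forcing_closure skew G S"
  by (auto intro: forcing_closure.init)

lemma forcing_closure_bounded:
  assumes "simple_graph G"
  shows "forcing_closure skew G S \<subseteq> S \<union> {0..<fst G}"
proof
  show "v \<in> S \<union> {0..<fst G}" if "v \<in> forcing_closure skew G S" for v
    using that by induction (use simple_graph_edgeD[OF assms] in auto)
qed

lemma forcing_closure_left_into_disjoint_union:
  assumes G: "simple_graph G" and "T \<subseteq> S"
  shows "forcing_closure skew G T \<subseteq> forcing_closure skew (disjoint_union G H) S"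
proof
  show "v \<in> forcing_closure skew (disjoint_union G H) S" if "v \<in> forcing_closure skew G T" for v
    using that
  proof induction
    case (init v)
    then show ?case using \<open>T \<subseteq> S\<close> by (auto intro: forcing_closure.init)
  next
    case (force u w)
    have "u < fst G" using simple_graph_edgeD[OF G force.hyps] by blast
    have edge: "(u, w) \<in> snd (disjoint_union G H)"
      using force.hyps disjoint_union_edge_left_iff[OF \<open>u < fst G\<close>] by blast
    show ?case
    proof (rule forcing_closure.force[OF _ edge])
      show "if skew then u < fst (disjoint_union G H)
          else u \<in> forcing_closure skew (disjoint_union G H) S"
        using force.IH(1) \<open>u < fst G\<close> by auto
      show "\<forall>x. (u, x) \<in> snd (disjoint_union G H) \<and> x \<noteq> w
          \<longrightarrow> x \<in> forcing_closure skew (disjoint_union G H) S"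
        using force.IH(2) disjoint_union_edge_left_iff[OF \<open>u < fst G\<close>] by blast
    qed
  qed
qed

lemma forcing_closure_right_into_disjoint_union:
  assumes G: "simple_graph G" and H: "simple_graph H"
  shows "(\<lambda>x. x + fst G) ` forcing_closure skew H {x. x + fst G \<in> S}
    \<subseteq> forcing_closure skew (disjoint_union G H) S"
proof -
  have "v + fst G \<in> forcing_closure skew (disjoint_union G H) S"
    if "v \<in> forcing_closure skew H {x. x + fst G \<in> S}" for v
    using that
  proof induction
    case (init v)
    then show ?case by (auto intro: forcing_closure.init)
  next
    case (force u w)
    have "u < fst H" using simple_graph_edgeD[OF H force.hyps] by blast
    have edge: "(u + fst G, w + fst G) \<in> snd (disjoint_union G H)"
      using force.hyps disjoint_union_edge_right_iff[OF G] by blast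
    show ?case
    proof (rule forcing_closure.force[OF _ edge])
      show "if skew then u + fst G < fst (disjoint_union G H)
          else u + fst G \<in> forcing_closure skew (disjoint_union G H) S"
        using force.IH(1) \<open>u < fst H\<close> by auto
      show "\<forall>x. (u + fst G, x) \<in> snd (disjoint_union G H) \<and> x \<noteq> w + fst G
          \<longrightarrow> x \<in> forcing_closure skew (disjoint_union G H) S"
        using force.IH(2) disjoint_union_edge_right_iff[OF G] by auto
    qed
  qed
  then show ?thesis by blast
qed

lemma forcing_closure_disjoint_union_left_part:
  assumes G: "simple_graph G"
    and "v \<in> forcing_closure skew (disjoint_union G H) S" and "v < fst G"
  shows "v \<in> forcing_closure skew G (S \<inter> {..<fst G})"
  using assms(2,3)
proof induction
  case (init v)
  then show ?case by (auto intro: forcing_closure.init)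
next
  case (force u w)
  have edge: "(u, w) \<in> snd G"
    using force.hyps \<open>w < fst G\<close> by (cases rule: disjoint_union_edgeE) auto
  then have "u < fst G" using simple_graph_edgeD[OF G] by blast
  show ?case
  proof (rule forcing_closure.force[OF _ edge])
    show "if skew then u < fst G else u \<in> forcing_closure skew G (S \<inter> {..<fst G})"
      using force.IH(1) \<open>u < fst G\<close> by auto
    show "\<forall>x. (u, x) \<in> snd G \<and> x \<noteq> w \<longrightarrow> x \<in> forcing_closure skew G (S \<inter> {..<fst G})"
      using force.IH(2) simple_graph_edgeD[OF G] disjoint_union_edge_left_iff[OF \<open>u < fst G\<close>]
      by blast
  qed
qed

lemma forcing_closure_disjoint_union_right_part:
  assumes G: "simple_graph G" and H: "simple_graph H"
    and "v + fst G \<in> forcing_closure skew (disjoint_union G H) S"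
  shows "v \<in> forcing_closure skew H {x. x + fst G \<in> S}"
proof -
  have "\<forall>v. u = v + fst G \<longrightarrow> v \<in> forcing_closure skew H {x. x + fst G \<in> S}"
    if "u \<in> forcing_closure skew (disjoint_union G H) S" for u
    using that
  proof induction
    case (init u)
    then show ?case by (auto intro: forcing_closure.init)
  next
    case (force u w)
    show ?case
    proof (intro allI impI)
      fix b assume "w = b + fst G"
      with force.hyps obtain a where edge: "(a, b) \<in> snd H" and "u = a + fst G"
        using simple_graph_edgeD[OF G] by (cases rule: disjoint_union_edgeE) auto
      show "b \<in> forcing_closure skew H {x. x + fst G \<in> S}"
      proof (rule forcing_closure.force[OF _ edge])
        show "if skew then a < fst H else a \<in> forcing_closure skew H {x. x + fst G \<in> S}"
          using force.IH(1) \<open>u = a + fst G\<close> simple_graph_edgeD[OF H edge] by auto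
        show "\<forall>x. (a, x) \<in> snd H \<and> x \<noteq> b \<longrightarrow> x \<in> forcing_closure skew H {x. x + fst G \<in> S}"
          using force.IH(2) \<open>u = a + fst G\<close> \<open>w = b + fst G\<close> disjoint_union_edge_right_iff[OF G]
          by auto
      qed
    qed
  qed
  then show ?thesis using assms(3) by blast
qed

lemma forcing_closure_disjoint_union:
  assumes "simple_graph G" and "simple_graph H"
  shows "forcing_closure skew (disjoint_union G H) S
    = forcing_closure skew G (S \<inter> {..<fst G})
      \<union> (\<lambda>x. x + fst G) ` forcing_closure skew H {x. x + fst G \<in> S}"
proof (intro equalityI subsetI)
  fix v assume v: "v \<in> forcing_closure skew (disjoint_union G H) S"
  show "v \<in> forcing_closure skew G (S \<inter> {..<fst G})
      \<union> (\<lambda>x. x + fst G) ` forcing_closure skew H {x. x + fst G \<in> S}"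
  proof (cases "v < fst G")
    case True
    then show ?thesis using forcing_closure_disjoint_union_left_part[OF assms(1) v] by blast
  next
    case False
    then have "v = (v - fst G) + fst G" by simp
    then have "v - fst G \<in> forcing_closure skew H {x. x + fst G \<in> S}"
      using forcing_closure_disjoint_union_right_part[OF assms] v by metis
    with \<open>v = (v - fst G) + fst G\<close> show ?thesis by blast
  qed
next
  fix v assume "v \<in> forcing_closure skew G (S \<inter> {..<fst G})
      \<union> (\<lambda>x. x + fst G) ` forcing_closure skew H {x. x + fst G \<in> S}"
  then show "v \<in> forcing_closure skew (disjoint_union G H) S"
    using forcing_closure_left_into_disjoint_union[OF assms(1), of "S \<inter> {..<fst G}" S]
      forcing_closure_right_into_disjoint_union[OF assms]
    by blast
qed

section \<open>Forcing numbers and their additivity\<close>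

definition forcing_number :: "bool \<Rightarrow> graph \<Rightarrow> nat" where
  "forcing_number skew G = (LEAST k. \<exists>S. S \<subseteq> {0..<fst G} \<and> card S = k
      \<and> forcing_closure skew G S = {0..<fst G})"

lemma zero_forcing_number_eq_forcing_number: "zero_forcing_number G = forcing_number False G"
  unfolding zero_forcing_number_def forcing_number_def zf_closure_eq_forcing_closure ..

lemma skew_zero_forcing_number_eq_forcing_number:
  "skew_zero_forcing_number G = forcing_number True G"
  unfolding skew_zero_forcing_number_def forcing_number_def szf_closure_eq_forcing_closure ..

lemma forcing_number_le:
  "S \<subseteq> {0..<fst G} \<Longrightarrow> forcing_closure skew G S = {0..<fst G} \<Longrightarrow> forcing_number skew G \<le> card S"
  unfolding forcing_number_def by (rule Least_le) blast

lemma forcing_number_attained: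
  assumes "simple_graph G"
  obtains S where "S \<subseteq> {0..<fst G}" "card S = forcing_number skew G"
    "forcing_closure skew G S = {0..<fst G}"
proof -
  have "forcing_closure skew G {0..<fst G} = {0..<fst G}"
    using forcing_closure_bounded[OF assms] subset_forcing_closure by blast
  then have "\<exists>k S. S \<subseteq> {0..<fst G} \<and> card S = k \<and> forcing_closure skew G S = {0..<fst G}"
    by blast
  then have "\<exists>S. S \<subseteq> {0..<fst G} \<and> card S = forcing_number skew G
      \<and> forcing_closure skew G S = {0..<fst G}"
    unfolding forcing_number_def by (rule LeastI_ex)
  then show ?thesis using that by blast
qed

lemma forcing_closure_disjoint_union_eq_vertices_iff:
  assumes G: "simple_graph G" and H: "simple_graph H" and S: "S \<subseteq> {0..<fst G + fst H}"
  shows "forcing_closure skew (disjoint_union G H) S = {0..<fst G + fst H}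
    \<longleftrightarrow> forcing_closure skew G (S \<inter> {..<fst G}) = {0..<fst G}
      \<and> forcing_closure skew H {x. x + fst G \<in> S} = {0..<fst H}"
proof -
  have "forcing_closure skew G (S \<inter> {..<fst G}) \<subseteq> {0..<fst G}"
    using forcing_closure_bounded[OF G] by fastforce
  moreover have "forcing_closure skew H {x. x + fst G \<in> S} \<subseteq> {0..<fst H}"
    using forcing_closure_bounded[OF H] S by fastforce
  ultimately show ?thesis
    unfolding forcing_closure_disjoint_union[OF G H] by (rule Un_shift_eq_atLeastLessThan_iff)
qed

lemma forcing_number_disjoint_union_le:
  assumes G: "simple_graph G" and H: "simple_graph H"
  shows "forcing_number skew (disjoint_union G H) \<le> forcing_number skew G + forcing_number skew H"
proof -
  obtain S1 where S1: "S1 \<subseteq> {0..<fst G}" "card S1 = forcing_number skew G"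
    "forcing_closure skew G S1 = {0..<fst G}"
    using forcing_number_attained[OF G] .
  obtain S2 where S2: "S2 \<subseteq> {0..<fst H}" "card S2 = forcing_number skew H"
    "forcing_closure skew H S2 = {0..<fst H}"
    using forcing_number_attained[OF H] .
  let ?S = "S1 \<union> (\<lambda>x. x + fst G) ` S2"
  have parts: "?S \<inter> {..<fst G} = S1" "{x. x + fst G \<in> ?S} = S2"
    using S1(1) by auto
  have "?S \<subseteq> {0..<fst G + fst H}" using S1(1) S2(1) by auto
  moreover have "forcing_closure skew (disjoint_union G H) ?S = {0..<fst G + fst H}"
    using forcing_closure_disjoint_union_eq_vertices_iff[OF G H \<open>?S \<subseteq> _\<close>] parts S1 S2 by simp
  ultimately have "forcing_number skew (disjoint_union G H) \<le> card ?S"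
    by (intro forcing_number_le) simp_all
  also have "card ?S = card S1 + card S2"
    using S1(1) S2(1) by (intro card_Un_shift) (auto intro: finite_subset)
  finally show ?thesis
    using S1(2) S2(2) by simp
qed

lemma forcing_number_disjoint_union_ge:
  assumes G: "simple_graph G" and H: "simple_graph H"
  shows "forcing_number skew G + forcing_number skew H \<le> forcing_number skew (disjoint_union G H)"
proof -
  obtain S where S: "S \<subseteq> {0..<fst G + fst H}" "card S = forcing_number skew (disjoint_union G H)"
    "forcing_closure skew (disjoint_union G H) S = {0..<fst G + fst H}"
    using forcing_number_attained[OF simple_graph_disjoint_union[OF G H]] by auto
  let ?S1 = "S \<inter> {..<fst G}" and ?S2 = "{x. x + fst G \<in> S}"
  have "?S1 \<subseteq> {0..<fst G}" "?S2 \<subseteq> {0..<fst H}" using S(1) by auto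
  moreover have "forcing_closure skew G ?S1 = {0..<fst G}" "forcing_closure skew H ?S2 = {0..<fst H}"
    using forcing_closure_disjoint_union_eq_vertices_iff[OF G H S(1)] S(3) by auto
  ultimately have "forcing_number skew G + forcing_number skew H \<le> card ?S1 + card ?S2"
    by (intro add_mono forcing_number_le)
  also have "\<dots> = card (?S1 \<union> (\<lambda>x. x + fst G) ` ?S2)"
    using \<open>?S1 \<subseteq> {0..<fst G}\<close> \<open>?S2 \<subseteq> {0..<fst H}\<close>
    by (intro card_Un_shift[symmetric]) (auto intro: finite_subset)
  also have "\<dots> = card S"
    by (simp only: Un_shift_split[of S "fst G", symmetric])
  finally show ?thesis
    using S(2) by simp
qed

lemma forcing_number_disjoint_union:
  "simple_graph G \<Longrightarrow> simple_graph H
    \<Longrightarrow> forcing_number skew (disjoint_union G H) = forcing_number skew G + forcing_number skew H"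
  by (intro antisym forcing_number_disjoint_union_le forcing_number_disjoint_union_ge)

lemma zero_forcing_number_disjoint_union:
  "simple_graph G \<Longrightarrow> simple_graph H
    \<Longrightarrow> zero_forcing_number (disjoint_union G H) = zero_forcing_number G + zero_forcing_number H"
  by (simp add: zero_forcing_number_eq_forcing_number forcing_number_disjoint_union)

lemma skew_zero_forcing_number_disjoint_union:
  "simple_graph G \<Longrightarrow> simple_graph H
    \<Longrightarrow> skew_zero_forcing_number (disjoint_union G H)
      = skew_zero_forcing_number G + skew_zero_forcing_number H"
  by (simp add: skew_zero_forcing_number_eq_forcing_number forcing_number_disjoint_union)

section \<open>Zero forcing numbers of stars and paths\<close>

lemma forcing_closure_False_empty: "forcing_closure False G {} = {}"
proof -
  have "v \<notin> forcing_closure False G {}" for v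
  proof
    assume "v \<in> forcing_closure False G {}"
    then show False by induction auto
  qed
  then show ?thesis by blast
qed

lemma zero_forcing_number_pos:
  assumes "simple_graph G" and "0 < fst G"
  shows "0 < zero_forcing_number G"
proof (rule ccontr)
  assume "\<not> 0 < zero_forcing_number G"
  then obtain S where "S \<subseteq> {0..<fst G}" "card S = 0" "forcing_closure False G S = {0..<fst G}"
    using forcing_number_attained[OF assms(1)] unfolding zero_forcing_number_eq_forcing_number
    by (metis gr0I)
  then have "S = {}" by (simp add: finite_subset)
  with \<open>forcing_closure False G S = {0..<fst G}\<close> \<open>0 < fst G\<close> show False
    by (simp add: forcing_closure_False_empty)
qed

lemma forcing_closure_twin_leaves:
  assumes "l1 \<noteq> l2" and "(c, l1) \<in> snd G" and "(c, l2) \<in> snd G"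
    and "\<And>x. (x, l1) \<in> snd G \<Longrightarrow> x = c" and "\<And>x. (x, l2) \<in> snd G \<Longrightarrow> x = c"
    and "l1 \<notin> S" and "l2 \<notin> S"
  shows "l1 \<notin> forcing_closure skew G S"
proof -
  txt \<open>Only \<open>c\<close> can force a leaf, and to do so it needs the other leaf to be blue already.\<close>
  have "v \<noteq> l1 \<and> v \<noteq> l2" if "v \<in> forcing_closure skew G S" for v
    using that
  proof induction
    case (init v)
    then show ?case using assms(6,7) by blast
  next
    case (force u w)
    show ?case
    proof (rule ccontr)
      assume "\<not> (w \<noteq> l1 \<and> w \<noteq> l2)"
      then obtain l' where "l' \<in> {l1, l2}" "l' \<noteq> w" "(u, l') \<in> snd G"
        using force.hyps assms(1-5) by blast
      then show False using force.IH(2) by blast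
    qed
  qed
  then show ?thesis by blast
qed

definition star_graph :: "nat \<Rightarrow> graph" where
  "star_graph k = (Suc k, {(i, j). (i = 0 \<and> j \<in> {1..k}) \<or> (j = 0 \<and> i \<in> {1..k})})"

definition path_graph :: "nat \<Rightarrow> graph" where
  "path_graph n = (n, {(i, j). i < n \<and> j < n \<and> (j = Suc i \<or> i = Suc j)})"

lemma fst_path_graph [simp]: "fst (path_graph n) = n"
  by (simp add: path_graph_def)

lemma simple_graph_star_graph: "simple_graph (star_graph k)"
  unfolding simple_graph_def star_graph_def by auto

lemma simple_graph_path_graph: "simple_graph (path_graph n)"
  unfolding simple_graph_def path_graph_def by auto

lemma forcing_number_star_graph: "k - 1 \<le> forcing_number skew (star_graph k)"
proof -
  obtain S where S: "S \<subseteq> {0..<Suc k}" "card S = forcing_number skew (star_graph k)"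
    "forcing_closure skew (star_graph k) S = {0..<Suc k}"
    using forcing_number_attained[OF simple_graph_star_graph] by (auto simp: star_graph_def)
  have "card ({1..k} - S) \<le> Suc 0"
    unfolding card_le_Suc0_iff_eq[OF finite_Diff[OF finite_atLeastAtMost]]
  proof (intro ballI)
    fix l1 l2 assume l: "l1 \<in> {1..k} - S" "l2 \<in> {1..k} - S"
    show "l1 = l2"
    proof (rule ccontr)
      assume "l1 \<noteq> l2"
      then have "l1 \<notin> forcing_closure skew (star_graph k) S"
        using l by (intro forcing_closure_twin_leaves[where c = 0]) (auto simp: star_graph_def)
      with S(3) l show False by auto
    qed
  qed
  moreover have "k \<le> card ({1..k} \<inter> S) + card ({1..k} - S)"
    by (metis card_Int_Diff card_atLeastAtMost diff_Suc_1 finite_atLeastAtMost order_refl)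
  moreover have "card ({1..k} \<inter> S) \<le> card S"
    using S(1) by (intro card_mono) (auto intro: finite_subset)
  ultimately show ?thesis using S(2) by linarith
qed

lemma forcing_number_path_graph: "forcing_number skew (path_graph n) \<le> 1"
proof (cases "n = 0")
  case True
  then show ?thesis
    using forcing_number_le[of "{}" "path_graph n" skew] subset_forcing_closure[of "{}"]
      forcing_closure_bounded[OF simple_graph_path_graph, of skew n "{}"]
    by (auto simp: path_graph_def)
next
  case False
  have "i \<in> forcing_closure skew (path_graph n) {0}" if "i < n" for i
    using that
  proof (induction i rule: less_induct)
    case (less i)
    show ?case
    proof (cases i)
      case 0
      then show ?thesis by (auto intro: forcing_closure.init)
    next
      case (Suc j)
      show ?thesis
      proof (rule forcing_closure.force[where u = j])
        show "if skew then j < fst (path_graph n) else j \<in> forcing_closure skew (path_graph n) {0}"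
          using less Suc by (auto simp: path_graph_def)
        show "(j, i) \<in> snd (path_graph n)" using less.prems Suc by (simp add: path_graph_def)
        show "\<forall>x. (j, x) \<in> snd (path_graph n) \<and> x \<noteq> i \<longrightarrow> x \<in> forcing_closure skew (path_graph n) {0}"
          using less Suc by (auto simp: path_graph_def)
      qed
    qed
  qed
  then have "forcing_closure skew (path_graph n) {0} = {0..<fst (path_graph n)}"
    using forcing_closure_bounded[OF simple_graph_path_graph, of skew n "{0}"] False
    by (auto simp: path_graph_def)
  then show ?thesis
    using forcing_number_le[of "{0}" "path_graph n" skew] False by (simp add: path_graph_def)
qed

lemma cospectral_star_3_path_2_path_5_path_1:
  "cospectral (disjoint_union (star_graph 3) (path_graph 2))
     (disjoint_union (path_graph 5) (path_graph 1))"
proof -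
  let ?A = "adj_matrix (disjoint_union (star_graph 3) (path_graph 2))"
  let ?B = "adj_matrix (disjoint_union (path_graph 5) (path_graph 1))"
  define P :: "real mat" where "P = mat 6 6 (\<lambda>(i, j).
    [[0, -1, 0, -1, 0, 0], [1, 0, -2, 0, 1, 1], [-1, 0, 0, 0, -1, -1],
     [-1, 0, 0, 0, -1, 0], [1, 0, 0, 0, -1, 0], [0, 1, 0, -1, 0, 0]] ! i ! j)"
  define Q :: "real mat" where "Q = mat 6 6 (\<lambda>(i, j).
    [[0, 0, 0, -1/2, 1/2, 0], [-1/2, 0, 0, 0, 0, 1/2], [0, -1/2, -1/2, 0, 0, 0],
     [-1/2, 0, 0, 0, 0, -1/2], [0, 0, 0, -1/2, -1/2, 0], [0, 0, -1, 1, 0, 0]] ! i ! j)"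
  have less_6: "i = 0 \<or> i = 1 \<or> i = 2 \<or> i = 3 \<or> i = 4 \<or> i = 5" if "i < 6" for i :: nat
    using that by auto
  have sum_6: "(\<Sum>k\<in>{0..<6::nat}. f k) = f 0 + f 1 + f 2 + f 3 + f 4 + (f 5 :: real)" for f
    by (simp add: eval_nat_numeral atLeast0_lessThan_Suc)
  have carrier: "?A \<in> carrier_mat 6 6" "?B \<in> carrier_mat 6 6" "P \<in> carrier_mat 6 6" "Q \<in> carrier_mat 6 6"
    by (auto simp: adj_matrix_def star_graph_def path_graph_def P_def Q_def)
  have AP: "?A * P = P * ?B"
  proof (rule eq_matI)
    fix i j assume "i < dim_row (P * ?B)" "j < dim_col (P * ?B)"
    then have "i < 6" "j < 6" using carrier by auto
    then show "(?A * P) $$ (i, j) = (P * ?B) $$ (i, j)"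
      using less_6 [OF \<open>i < 6\<close>] less_6[OF \<open>j < 6\<close>] carrier
      by (elim disjE) (simp_all add: P_def adj_matrix_def disjoint_union_def shift_edges_iff
          star_graph_def path_graph_def scalar_prod_def sum_6)
  qed (use carrier in auto)
  have PQ: "P * Q = 1\<^sub>m 6"
  proof (rule eq_matI)
    fix i j assume "i < dim_row (1\<^sub>m 6 :: real mat)" "j < dim_col (1\<^sub>m 6 :: real mat)"
    then have "i < 6" "j < 6" by auto
    then show "(P * Q) $$ (i, j) = 1\<^sub>m 6 $$ (i, j)"
      using less_6 [OF \<open>i < 6\<close>] less_6[OF \<open>j < 6\<close>]
      by (elim disjE) (simp_all add: P_def Q_def scalar_prod_def sum_6)
  qed (use carrier in auto)
  have "?A = ?A * (P * Q)" using carrier by (simp add: PQ)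
  also have "\<dots> = P * ?B * Q" using carrier by (simp add: AP flip: assoc_mult_mat)
  finally have "similar_mat ?A ?B"
    using carrier PQ mat_mult_left_right_inverse[OF carrier(3,4) PQ]
    by (intro similar_matI[where P = P and Q = Q and n = 6]) auto
  then show ?thesis
    unfolding cospectral_def adj_spectrum_def by (simp add: char_poly_similar)
qed

lemma zero_forcing_number_path_5_path_1_less_star_3_path_2:
  "zero_forcing_number (disjoint_union (path_graph 5) (path_graph 1))
    < zero_forcing_number (disjoint_union (star_graph 3) (path_graph 2))"
proof -
  have path: "zero_forcing_number (path_graph n) \<le> 1" for n
    using forcing_number_path_graph by (simp add: zero_forcing_number_eq_forcing_number)
  have "zero_forcing_number (disjoint_union (path_graph 5) (path_graph 1)) \<le> 2"
    using path[of 5] path[of 1]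
    by (simp add: zero_forcing_number_disjoint_union simple_graph_path_graph del: One_nat_def)
  moreover have "2 \<le> zero_forcing_number (star_graph 3)"
    using forcing_number_star_graph[of 3 False] by (simp add: zero_forcing_number_eq_forcing_number)
  moreover have "1 \<le> zero_forcing_number (path_graph 2)"
    using zero_forcing_number_pos[OF simple_graph_path_graph, of 2] by simp
  ultimately show ?thesis
    by (simp add: zero_forcing_number_disjoint_union simple_graph_path_graph simple_graph_star_graph)
qed

section \<open>Building the pairs\<close>

definition cospectral_with_distinct_forcing_numbers :: "graph \<Rightarrow> graph \<Rightarrow> bool" where
  "cospectral_with_distinct_forcing_numbers G H \<longleftrightarrow>
    simple_graph G \<and> simple_graph H \<and> cospectral G H
    \<and> zero_forcing_number G \<noteq> zero_forcing_number H
    \<and> skew_zero_forcing_number G \<noteq> skew_zero_forcing_number H"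

lemma cospectral_with_distinct_forcing_numbers_disjoint_union:
  assumes "simple_graph G" "simple_graph G'" "simple_graph H" "simple_graph H'"
    and "cospectral G G'" "cospectral H H'"
    and "zero_forcing_number G + zero_forcing_number H \<noteq> zero_forcing_number G' + zero_forcing_number H'"
    and "skew_zero_forcing_number G + skew_zero_forcing_number H
      \<noteq> skew_zero_forcing_number G' + skew_zero_forcing_number H'"
  shows "cospectral_with_distinct_forcing_numbers (disjoint_union G H) (disjoint_union G' H')"
  using assms unfolding cospectral_with_distinct_forcing_numbers_def
  by (simp add: simple_graph_disjoint_union cospectral_disjoint_union
      zero_forcing_number_disjoint_union skew_zero_forcing_number_disjoint_union)

lemma cospectral_with_distinct_forcing_numbers_exists:
  assumes G: "simple_graph G1" "simple_graph G2" "cospectral G1 G2"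
    and skew_distinct: "skew_zero_forcing_number G1 \<noteq> skew_zero_forcing_number G2"
    and H: "simple_graph H1" "simple_graph H2" "cospectral H1 H2"
    and zero_distinct: "zero_forcing_number H1 \<noteq> zero_forcing_number H2"
  shows "\<exists>P1 P2. cospectral_with_distinct_forcing_numbers P1 P2"
proof (cases "zero_forcing_number G1 = zero_forcing_number G2")
  case False
  have "cospectral_with_distinct_forcing_numbers (disjoint_union G1 H1) (disjoint_union G2 H1)"
    using G H False skew_distinct
    by (intro cospectral_with_distinct_forcing_numbers_disjoint_union) (simp_all add: cospectral_def)
  then show ?thesis by blast
next
  case True
  \<comment> \<open>if both sums below coincided, adding the two equations would give equal \<open>Z\<^sub>-\<close> for \<open>G1\<close>, \<open>G2\<close>\<close>
  consider
    "skew_zero_forcing_number G1 + skew_zero_forcing_number H1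
      \<noteq> skew_zero_forcing_number G2 + skew_zero_forcing_number H2"
  | "skew_zero_forcing_number G1 + skew_zero_forcing_number H2
      \<noteq> skew_zero_forcing_number G2 + skew_zero_forcing_number H1"
    using skew_distinct by linarith
  then show ?thesis
  proof cases
    case 1
    have "cospectral_with_distinct_forcing_numbers (disjoint_union G1 H1) (disjoint_union G2 H2)"
      using G H True zero_distinct 1
      by (intro cospectral_with_distinct_forcing_numbers_disjoint_union) simp_all
    then show ?thesis by blast
  next
    case 2
    have "cospectral_with_distinct_forcing_numbers (disjoint_union G1 H2) (disjoint_union G2 H1)"
      using G H True zero_distinct 2
      by (intro cospectral_with_distinct_forcing_numbers_disjoint_union) (simp_all add: cospectral_def)
    then show ?thesis by blast
  qed
qed

lemma cospectral_with_distinct_forcing_numbers_add_isolated: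
  assumes "cospectral_with_distinct_forcing_numbers G H"
  shows "cospectral_with_distinct_forcing_numbers (disjoint_union G (k, {})) (disjoint_union H (k, {}))"
  using assms by (intro cospectral_with_distinct_forcing_numbers_disjoint_union)
    (auto simp: cospectral_with_distinct_forcing_numbers_def simple_graph_edgeless cospectral_def)

theorem proposition3p3:
  fixes n :: nat and E1 E2 :: "(nat \<times> nat) set"
  assumes "simple_graph (n, E1)" and "simple_graph (n, E2)"
    and "cospectral (n, E1) (n, E2)"
    and "skew_zero_forcing_number (n, E1) \<noteq> skew_zero_forcing_number (n, E2)"
    and "skew_zero_forcing_number (n, E1) = max_skew_nullity (n, E1)"
    and "skew_zero_forcing_number (n, E2) = max_skew_nullity (n, E2)"
  shows "infinite {(G, H). simple_graph G \<and> simple_graph H \<and> cospectral G H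
           \<and> zero_forcing_number G \<noteq> zero_forcing_number H
           \<and> skew_zero_forcing_number G \<noteq> skew_zero_forcing_number H}"
proof -
  obtain P1 P2 where P: "cospectral_with_distinct_forcing_numbers P1 P2"
    using cospectral_with_distinct_forcing_numbers_exists[OF assms(1-4)
        simple_graph_disjoint_union[OF simple_graph_star_graph simple_graph_path_graph]
        simple_graph_disjoint_union[OF simple_graph_path_graph simple_graph_path_graph]
        cospectral_star_3_path_2_path_5_path_1]
      zero_forcing_number_path_5_path_1_less_star_3_path_2
    by (metis less_irrefl)
  define pad where "pad k = (disjoint_union P1 (k, {}), disjoint_union P2 (k, {}))" for k
  have "inj pad" by (rule injI) (simp add: pad_def disjoint_union_def)
  moreover have "range pad \<subseteq> {(G, H). cospectral_with_distinct_forcing_numbers G H}"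
    using P by (auto simp: pad_def intro: cospectral_with_distinct_forcing_numbers_add_isolated)
  ultimately show ?thesis
    unfolding cospectral_with_distinct_forcing_numbers_def
    by (meson infinite_super range_inj_infinite)
qed

end
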